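(* Let $c>0$ and let $\nu,\tilde\nu$ be probability measures on $\mathbb R_+$ different from $\boldsymbol d_0$. Suppose that for $i=1,2$ the triple $(\boldsymbol{\tilde\delta}_i,\boldsymbol\delta_i,\boldsymbol x_i)$ satisfies: $\boldsymbol{\tilde\delta}_i\in\widetilde{\mathcal D}$, $\boldsymbol x_i\in\mathbb R\setminus\{0\}$, $\boldsymbol\delta_i=c\int\frac{t}{-\boldsymbol x_i(1+\boldsymbol{\tilde\delta}_i t)}\nu(dt)\in\mathcal D$, $\boldsymbol{\tilde\delta}_i=\int\frac{t}{-\boldsymbol x_i(1+\boldsymbol\delta_i t)}\tilde\nu(dt)$, and $$1-\boldsymbol x_i^2\Bigl(c\int\frac{t^2}{\boldsymbol x_i^2(1+\boldsymbol{\tilde\delta}_i t)^2}\nu(dt)\Bigr)\Bigl(\int\frac{t^2}{\boldsymbol x_i^2(1+\boldsymbol\delta_i t)^2}\tilde\nu(dt)\Bigr)>0.$$ Then $\boldsymbol{\tilde\delta}_1\neq\boldsymbol{\tilde\delta}_2\Rightarrow\boldsymbol x_1\neq\boldsymbol x_2$, and $\boldsymbol\delta_1\neq\boldsymbol\delta_2\Rightarrow\boldsymbol x_1\neq\boldsymbol x_2$.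
   Context: $\boldsymbol d_0$ is the Dirac mass at $0$. Define $\mathcal D=\{0\}\cup\{\boldsymbol\delta\in\mathbb R\setminus\{0\}:-\boldsymbol\delta^{-1}\notin\operatorname{supp}(\tilde\nu)\}$ if $\operatorname{supp}(\tilde\nu)$ is compact and $\mathcal D=\{\boldsymbol\delta\in\mathbb R\setminus\{0\}:-\boldsymbol\delta^{-1}\notin\operatorname{supp}(\tilde\nu)\}$ otherwise; $\widetilde{\mathcal D}$ is defined in the same way with $\nu$ in place of $\tilde\nu$. *)

theory Defs
  imports "HOL-Probability.Probability"
begin

definition msupp :: "real measure \<Rightarrow> real set" where
  "msupp M = {x. \<forall>e>0. emeasure M (ball x e) > 0}"

text \<open>The set D built from a measure mu (D uses nu-tilde, D-tilde uses nu).\<close>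
definition Dset :: "real measure \<Rightarrow> real set" where
  "Dset mu = (if compact (msupp mu) then {0} else {}) \<union>
             {d. d \<noteq> 0 \<and> - inverse d \<notin> msupp mu}"

definition prob_Rplus_nondirac :: "real measure \<Rightarrow> bool" where
  "prob_Rplus_nondirac M \<longleftrightarrow> prob_space M \<and> sets M = sets borel \<and>
     emeasure M {..<0} = 0 \<and> M \<noteq> return borel 0"

end

theory Submission
  imports Defs
begin

text \<open>For \<open>a \<in> Dset M\<close> the function \<open>g\<^sub>a t = t / (1 + a t)\<close> is bounded \<open>M\<close>-almost
  everywhere, so the resolvent identity \<open>g\<^sub>a - g\<^sub>b = (b - a) g\<^sub>a g\<^sub>b\<close> can be integrated.
  For two solutions \<open>(dt\<^sub>i, d\<^sub>i)\<close> with the same \<open>x\<close> it turns the fixed-point equations into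
  \<open>x (d\<^sub>1 - d\<^sub>2) = c A (dt\<^sub>1 - dt\<^sub>2)\<close> and \<open>x (dt\<^sub>1 - dt\<^sub>2) = B (d\<^sub>1 - d\<^sub>2)\<close>, where \<open>A\<close> and
  \<open>B\<close> are the integrals of the products of the two resolvents against \<open>\<nu>\<close> and \<open>\<tilde>\<nu>\<close>.
  If \<open>dt\<^sub>1 \<noteq> dt\<^sub>2\<close> this forces \<open>c A B = x\<^sup>2\<close>, whereas by Cauchy--Schwarz \<open>(c A B)\<^sup>2\<close> is at
  most the product of the two stability quantities \<open>c \<integral> g\<^sup>2 d\<nu> \<integral> g\<^sup>2 d\<tilde>\<nu>\<close>, each of which
  is smaller than \<open>x\<^sup>2\<close>.\<close>

lemma AE_in_msupp:
  fixes M :: "real measure"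
  assumes sets_M: "sets M = sets borel"
  shows "AE t in M. t \<in> msupp M"
proof -
  define F where "F = {ball y e | y e. e > 0 \<and> emeasure M (ball y e) = 0}"
  have "\<And>S. S \<in> F \<Longrightarrow> open S" unfolding F_def by auto
  then obtain F' where F': "F' \<subseteq> F" "countable F'" "\<Union>F' = \<Union>F" by (rule Lindelof)
  have "(\<Union>S\<in>F'. S) \<in> null_sets M"
  proof (rule null_sets_UN'[OF F'(2)])
    fix S assume "S \<in> F'"
    then obtain y e where S: "S = ball y e" and "emeasure M (ball y e) = 0"
      using F'(1) unfolding F_def by blast
    moreover have "S \<in> sets M" unfolding sets_M S by simp
    ultimately show "S \<in> null_sets M" by (simp add: null_setsI)
  qed
  moreover have "{t \<in> space M. t \<notin> msupp M} \<subseteq> \<Union>F'"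
  proof
    fix t assume "t \<in> {t \<in> space M. t \<notin> msupp M}"
    then obtain e where "e > 0" "\<not> emeasure M (ball t e) > 0" unfolding msupp_def by auto
    then have "ball t e \<in> F" unfolding F_def by (auto simp: zero_less_iff_neq_zero)
    with \<open>e > 0\<close> show "t \<in> \<Union>F'" using F'(3) by (metis UnionI centre_in_ball)
  qed
  ultimately show ?thesis by (intro AE_I') simp_all
qed

lemma abs_resolvent_le_off_pole:
  fixes a e t :: real
  assumes "a < 0" "e > 0" and off_pole: "e \<le> \<bar>t + inverse a\<bar>"
  shows "\<bar>t / (1 + a * t)\<bar> \<le> 1 / \<bar>a\<bar> + \<bar>inverse a\<bar> / (\<bar>a\<bar> * e)"
proof -
  define p where "p = \<bar>inverse a\<bar>"
  have p: "p > 0" "p = - inverse a" using \<open>a < 0\<close> by (simp_all add: p_def)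
  have factor: "1 + a * t = a * (t - p)" using \<open>a < 0\<close> by (simp add: p field_simps)
  have dist: "0 < e" "e \<le> \<bar>t - p\<bar>" using assms by (simp_all add: p)
  have "\<bar>t / (1 + a * t)\<bar> = \<bar>t\<bar> / (\<bar>a\<bar> * \<bar>t - p\<bar>)" by (simp add: factor abs_mult)
  also have "\<dots> \<le> (\<bar>t - p\<bar> + p) / (\<bar>a\<bar> * \<bar>t - p\<bar>)"
  proof (rule divide_right_mono)
    show "\<bar>t\<bar> \<le> \<bar>t - p\<bar> + p" using abs_triangle_ineq[of "t - p" p] p(1) by simp
  qed simp
  also have "\<dots> = 1 / \<bar>a\<bar> + p / (\<bar>a\<bar> * \<bar>t - p\<bar>)"
    using dist \<open>a < 0\<close> by (simp add: field_simps)
  also have "\<dots> \<le> 1 / \<bar>a\<bar> + p / (\<bar>a\<bar> * e)"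
    using dist \<open>a < 0\<close> p(1)
    by (intro add_left_mono divide_left_mono mult_left_mono)
      (auto simp: zero_less_mult_iff mult_less_0_iff)
  finally show ?thesis by (simp add: p_def)
qed

lemma Dset_AE_resolvent_bounded:
  fixes M :: "real measure"
  assumes sets_M: "sets M = sets borel" and nonneg: "emeasure M {..<0} = 0"
    and a: "a \<in> Dset M"
  shows "\<exists>K. AE t in M. 1 + a * t \<noteq> 0 \<and> \<bar>t / (1 + a * t)\<bar> \<le> K"
proof -
  have AE_nonneg: "AE t in M. t \<ge> 0"
    by (rule AE_I'[of "{..<0}"]) (use nonneg sets_M in \<open>auto simp: null_sets_def\<close>)
  consider "a = 0" "compact (msupp M)" | "a > 0" | "a < 0" "- inverse a \<notin> msupp M"
    using a unfolding Dset_def by (cases "a = 0"; cases "a > 0") (auto split: if_splits)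
  then show ?thesis
  proof cases
    case 1
    then obtain R where R: "\<forall>y\<in>msupp M. \<bar>y\<bar> \<le> R"
      using compact_imp_bounded bounded_real by blast
    have "AE t in M. 1 + a * t \<noteq> 0 \<and> \<bar>t / (1 + a * t)\<bar> \<le> R"
      using AE_in_msupp[OF sets_M] by eventually_elim (use R 1 in auto)
    then show ?thesis by blast
  next
    case 2
    have "AE t in M. 1 + a * t \<noteq> 0 \<and> \<bar>t / (1 + a * t)\<bar> \<le> 1 / a"
      using AE_nonneg
    proof eventually_elim
      case (elim t)
      with 2 have "0 < 1 + a * t" by (simp add: add_pos_nonneg)
      with 2 elim show ?case by (simp add: divide_simps)
    qed
    then show ?thesis by blast
  next
    case 3
    then obtain e where e: "e > 0" "emeasure M (ball (- inverse a) e) = 0"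
      unfolding msupp_def by (auto simp: not_less)
    have "AE t in M. t \<notin> ball (- inverse a) e"
      by (rule AE_I'[of "ball (- inverse a) e"]) (use e sets_M in \<open>auto simp: null_sets_def\<close>)
    then have "AE t in M. 1 + a * t \<noteq> 0 \<and>
        \<bar>t / (1 + a * t)\<bar> \<le> 1 / \<bar>a\<bar> + \<bar>inverse a\<bar> / (\<bar>a\<bar> * e)"
    proof eventually_elim
      case (elim t)
      then have off_pole: "e \<le> \<bar>t + inverse a\<bar>" by (simp add: dist_real_def)
      have "1 + a * t = a * (t + inverse a)" using 3 by (simp add: field_simps)
      with e off_pole 3 have "1 + a * t \<noteq> 0" by auto
      with abs_resolvent_le_off_pole[OF 3(1) e(1) off_pole] show ?case by simp
    qed
    then show ?thesis by blast
  qed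
qed

context
  fixes M :: "real measure"
  assumes finite: "finite_measure M" and sets_M: "sets M = sets borel"
    and nonneg: "emeasure M {..<0} = 0"
begin

lemma resolvent_borel_measurable: "(\<lambda>t. t / (1 + a * t)) \<in> borel_measurable M"
  unfolding measurable_cong_sets[OF sets_M refl] by measurable

lemma integrable_resolvent:
  assumes "a \<in> Dset M"
  shows "integrable M (\<lambda>t. t / (1 + a * t))"
proof -
  interpret finite_measure M by (rule finite)
  obtain K where "AE t in M. 1 + a * t \<noteq> 0 \<and> \<bar>t / (1 + a * t)\<bar> \<le> K"
    using Dset_AE_resolvent_bounded[OF sets_M nonneg assms] by blast
  then show ?thesis
    by (intro integrable_const_bound[where B=K] resolvent_borel_measurable) auto
qed

lemma integrable_resolvent_mult:
  assumes "a \<in> Dset M" "b \<in> Dset M"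
  shows "integrable M (\<lambda>t. t / (1 + a * t) * (t / (1 + b * t)))"
proof -
  interpret finite_measure M by (rule finite)
  obtain Ka where Ka: "AE t in M. 1 + a * t \<noteq> 0 \<and> \<bar>t / (1 + a * t)\<bar> \<le> Ka"
    using Dset_AE_resolvent_bounded[OF sets_M nonneg assms(1)] by blast
  obtain Kb where Kb: "AE t in M. 1 + b * t \<noteq> 0 \<and> \<bar>t / (1 + b * t)\<bar> \<le> Kb"
    using Dset_AE_resolvent_bounded[OF sets_M nonneg assms(2)] by blast
  have "AE t in M. norm (t / (1 + a * t) * (t / (1 + b * t))) \<le> Ka * Kb"
    using Ka Kb
  proof eventually_elim
    case (elim t)
    then have "0 \<le> Ka" by (meson abs_ge_zero order_trans)
    with elim show ?case by (simp only: real_norm_def abs_mult) (intro mult_mono; simp)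
  qed
  moreover have "(\<lambda>t. t / (1 + a * t) * (t / (1 + b * t))) \<in> borel_measurable M"
    using resolvent_borel_measurable by measurable
  ultimately show ?thesis by (intro integrable_const_bound[where B="Ka * Kb"])
qed

lemma integral_resolvent_diff:
  assumes a: "a \<in> Dset M" and b: "b \<in> Dset M"
  shows "(\<integral>t. t / (1 + a * t) \<partial>M) - (\<integral>t. t / (1 + b * t) \<partial>M)
       = (b - a) * (\<integral>t. t / (1 + a * t) * (t / (1 + b * t)) \<partial>M)"
proof -
  have pole_free: "AE t in M. 1 + a * t \<noteq> 0 \<and> 1 + b * t \<noteq> 0"
    using Dset_AE_resolvent_bounded[OF sets_M nonneg a] Dset_AE_resolvent_bounded[OF sets_M nonneg b]
    by (fastforce elim: eventually_elim2)
  have "(\<integral>t. t / (1 + a * t) \<partial>M) - (\<integral>t. t / (1 + b * t) \<partial>M)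
      = (\<integral>t. t / (1 + a * t) - t / (1 + b * t) \<partial>M)"
    using integrable_resolvent[OF a] integrable_resolvent[OF b] by simp
  also have "\<dots> = (\<integral>t. (b - a) * (t / (1 + a * t) * (t / (1 + b * t))) \<partial>M)"
  proof (rule integral_cong_AE)
    show "AE t in M. t / (1 + a * t) - t / (1 + b * t) = (b - a) * (t / (1 + a * t) * (t / (1 + b * t)))"
      using pole_free by eventually_elim (simp add: field_simps)
  qed (intro borel_measurable_integrable Bochner_Integration.integrable_diff integrable_mult_right
      integrable_resolvent integrable_resolvent_mult a b)+
  finally show ?thesis by (simp only: integral_mult_right_zero)
qed

end

lemma nonneg_quadratic_imp_discriminant:
  fixes P Q R :: real
  assumes nonneg: "\<And>l. 0 \<le> P + 2 * l * Q + l\<^sup>2 * R" and "R \<ge> 0"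
  shows "Q\<^sup>2 \<le> P * R"
proof (cases "R = 0")
  case True
  have "Q = 0"
  proof (rule ccontr)
    assume "Q \<noteq> 0"
    have "0 \<le> P + 2 * (- (\<bar>P\<bar> + 1) / Q) * Q" using nonneg[of "- (\<bar>P\<bar> + 1) / Q"] True by simp
    also have "\<dots> = P - 2 * (\<bar>P\<bar> + 1)" using \<open>Q \<noteq> 0\<close> by (simp add: field_simps)
    finally show False by (cases "P \<ge> 0") auto
  qed
  with True show ?thesis by simp
next
  case False
  with \<open>R \<ge> 0\<close> have "R > 0" by simp
  have "0 \<le> P + 2 * (- Q / R) * Q + (- Q / R)\<^sup>2 * R" by (rule nonneg)
  also have "\<dots> = P - Q\<^sup>2 / R" using \<open>R > 0\<close> by (simp add: field_simps power2_eq_square)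
  finally show ?thesis using \<open>R > 0\<close> by (simp add: field_simps)
qed

lemma Cauchy_Schwarz_integral:
  fixes f g :: "'a \<Rightarrow> real"
  assumes "integrable M (\<lambda>t. (f t)\<^sup>2)" "integrable M (\<lambda>t. (g t)\<^sup>2)"
    and "integrable M (\<lambda>t. f t * g t)"
  shows "(\<integral>t. f t * g t \<partial>M)\<^sup>2 \<le> (\<integral>t. (f t)\<^sup>2 \<partial>M) * (\<integral>t. (g t)\<^sup>2 \<partial>M)"
proof (rule nonneg_quadratic_imp_discriminant)
  fix l :: real
  have "0 \<le> (\<integral>t. (f t + l * g t)\<^sup>2 \<partial>M)" by simp
  also have "\<dots> = (\<integral>t. (f t)\<^sup>2 + (2 * l) * (f t * g t) + l\<^sup>2 * (g t)\<^sup>2 \<partial>M)"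
    by (simp add: power2_eq_square algebra_simps)
  also have "\<dots> = (\<integral>t. (f t)\<^sup>2 \<partial>M) + 2 * l * (\<integral>t. f t * g t \<partial>M) + l\<^sup>2 * (\<integral>t. (g t)\<^sup>2 \<partial>M)"
    using assms by simp
  finally show "0 \<le> (\<integral>t. (f t)\<^sup>2 \<partial>M) + 2 * l * (\<integral>t. f t * g t \<partial>M) + l\<^sup>2 * (\<integral>t. (g t)\<^sup>2 \<partial>M)" .
qed simp

lemma eq_if_cross_relations:
  fixes X c A B A\<^sub>1 A\<^sub>2 B\<^sub>1 B\<^sub>2 a\<^sub>1 a\<^sub>2 b\<^sub>1 b\<^sub>2 :: real
  assumes b_rel: "X * (b\<^sub>1 - b\<^sub>2) = c * A * (a\<^sub>1 - a\<^sub>2)"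
    and a_rel: "X * (a\<^sub>1 - a\<^sub>2) = B * (b\<^sub>1 - b\<^sub>2)"
    and A: "A\<^sup>2 \<le> A\<^sub>1 * A\<^sub>2" and B: "B\<^sup>2 \<le> B\<^sub>1 * B\<^sub>2"
    and "c \<ge> 0" "A\<^sub>1 \<ge> 0" "A\<^sub>2 \<ge> 0" "B\<^sub>1 \<ge> 0" "B\<^sub>2 \<ge> 0"
    and stable\<^sub>1: "c * A\<^sub>1 * B\<^sub>1 < X\<^sup>2" and stable\<^sub>2: "c * A\<^sub>2 * B\<^sub>2 < X\<^sup>2"
  shows "a\<^sub>1 = a\<^sub>2"
proof (rule ccontr)
  assume "a\<^sub>1 \<noteq> a\<^sub>2"
  have "X\<^sup>2 * (a\<^sub>1 - a\<^sub>2) = c * A * B * (a\<^sub>1 - a\<^sub>2)"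
    by (metis a_rel b_rel mult.assoc mult.left_commute power2_eq_square)
  with \<open>a\<^sub>1 \<noteq> a\<^sub>2\<close> have "c * A * B = X\<^sup>2" by simp
  then have "X\<^sup>2 * X\<^sup>2 = c\<^sup>2 * A\<^sup>2 * B\<^sup>2" by (metis power2_eq_square power_mult_distrib)
  also have "\<dots> \<le> c\<^sup>2 * (A\<^sub>1 * A\<^sub>2) * (B\<^sub>1 * B\<^sub>2)"
    using A B assms(5-9) by (intro mult_mono mult_left_mono) auto
  also have "\<dots> = (c * A\<^sub>1 * B\<^sub>1) * (c * A\<^sub>2 * B\<^sub>2)" by (simp add: power2_eq_square algebra_simps)
  also have "\<dots> < X\<^sup>2 * X\<^sup>2"
    using stable\<^sub>1 stable\<^sub>2 assms(5-9) by (intro mult_strict_mono') auto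
  finally show False by simp
qed

definition stable_solution ::
    "real \<Rightarrow> real measure \<Rightarrow> real measure \<Rightarrow> real \<Rightarrow> real \<Rightarrow> real \<Rightarrow> bool" where
  "stable_solution c nu nut x dt d \<longleftrightarrow>
     dt \<in> Dset nu \<and> x \<noteq> 0 \<and>
     d = c * (\<integral>t. t / (- x * (1 + dt * t)) \<partial>nu) \<and> d \<in> Dset nut \<and>
     dt = (\<integral>t. t / (- x * (1 + d * t)) \<partial>nut) \<and>
     1 - x\<^sup>2 * (c * (\<integral>t. t\<^sup>2 / (x\<^sup>2 * (1 + dt * t)\<^sup>2) \<partial>nu))
           * (\<integral>t. t\<^sup>2 / (x\<^sup>2 * (1 + d * t)\<^sup>2) \<partial>nut) > 0"

lemma stable_solutionD:
  assumes "stable_solution c nu nut x dt d"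
  shows "dt \<in> Dset nu" "d \<in> Dset nut" "x \<noteq> 0"
    and "x * d = - c * (\<integral>t. t / (1 + dt * t) \<partial>nu)"
    and "x * dt = - (\<integral>t. t / (1 + d * t) \<partial>nut)"
    and "c * (\<integral>t. (t / (1 + dt * t))\<^sup>2 \<partial>nu) * (\<integral>t. (t / (1 + d * t))\<^sup>2 \<partial>nut) < x\<^sup>2"
proof -
  note sol = assms[unfolded stable_solution_def]
  show "dt \<in> Dset nu" "d \<in> Dset nut" and x: "x \<noteq> 0" using sol by blast+
  have scaled: "(\<lambda>t. t / (- x * (1 + a * t))) = (\<lambda>t. t / (1 + a * t) / (- x))"
    "(\<lambda>t. t\<^sup>2 / (x\<^sup>2 * (1 + a * t)\<^sup>2)) = (\<lambda>t. (t / (1 + a * t))\<^sup>2 / x\<^sup>2)" for a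
    by (simp_all add: power_divide divide_divide_eq_left mult.commute)
  have "d = c * (\<integral>t. t / (- x * (1 + dt * t)) \<partial>nu)" using sol by blast
  then have "d = c * ((\<integral>t. t / (1 + dt * t) \<partial>nu) / (- x))"
    by (simp only: scaled integral_divide_zero)
  with x show "x * d = - c * (\<integral>t. t / (1 + dt * t) \<partial>nu)" by (simp add: field_simps)
  have "dt = (\<integral>t. t / (- x * (1 + d * t)) \<partial>nut)" using sol by blast
  then have "dt = (\<integral>t. t / (1 + d * t) \<partial>nut) / (- x)"
    by (simp only: scaled integral_divide_zero)
  with x show "x * dt = - (\<integral>t. t / (1 + d * t) \<partial>nut)" by (simp add: field_simps)
  have "1 - x\<^sup>2 * (c * (\<integral>t. t\<^sup>2 / (x\<^sup>2 * (1 + dt * t)\<^sup>2) \<partial>nu))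
           * (\<integral>t. t\<^sup>2 / (x\<^sup>2 * (1 + d * t)\<^sup>2) \<partial>nut) > 0" using sol by blast
  then have "1 - x\<^sup>2 * (c * ((\<integral>t. (t / (1 + dt * t))\<^sup>2 \<partial>nu) / x\<^sup>2))
           * ((\<integral>t. (t / (1 + d * t))\<^sup>2 \<partial>nut) / x\<^sup>2) > 0"
    by (simp only: scaled integral_divide_zero)
  with x show "c * (\<integral>t. (t / (1 + dt * t))\<^sup>2 \<partial>nu) * (\<integral>t. (t / (1 + d * t))\<^sup>2 \<partial>nut) < x\<^sup>2"
    by (simp add: field_simps)
qed

lemma stable_solution_unique:
  assumes nu: "finite_measure nu" "sets nu = sets borel" "emeasure nu {..<0} = 0"
    and nut: "finite_measure nut" "sets nut = sets borel" "emeasure nut {..<0} = 0"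
    and "c \<ge> 0"
    and sol\<^sub>1: "stable_solution c nu nut x a\<^sub>1 b\<^sub>1" and sol\<^sub>2: "stable_solution c nu nut x a\<^sub>2 b\<^sub>2"
  shows "a\<^sub>1 = a\<^sub>2 \<and> b\<^sub>1 = b\<^sub>2"
proof -
  note s\<^sub>1 = stable_solutionD[OF sol\<^sub>1] and s\<^sub>2 = stable_solutionD[OF sol\<^sub>2]
  define A where "A = (\<integral>t. t / (1 + a\<^sub>1 * t) * (t / (1 + a\<^sub>2 * t)) \<partial>nu)"
  define B where "B = (\<integral>t. t / (1 + b\<^sub>1 * t) * (t / (1 + b\<^sub>2 * t)) \<partial>nut)"
  have b_rel: "x * (b\<^sub>1 - b\<^sub>2) = c * A * (a\<^sub>1 - a\<^sub>2)"
  proof -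
    have "x * (b\<^sub>1 - b\<^sub>2)
        = - c * ((\<integral>t. t / (1 + a\<^sub>1 * t) \<partial>nu) - (\<integral>t. t / (1 + a\<^sub>2 * t) \<partial>nu))"
      using s\<^sub>1(4) s\<^sub>2(4) by (simp add: algebra_simps)
    then show ?thesis
      unfolding A_def integral_resolvent_diff[OF nu s\<^sub>1(1) s\<^sub>2(1)] by (simp add: algebra_simps)
  qed
  have a_rel: "x * (a\<^sub>1 - a\<^sub>2) = B * (b\<^sub>1 - b\<^sub>2)"
  proof -
    have "x * (a\<^sub>1 - a\<^sub>2)
        = - ((\<integral>t. t / (1 + b\<^sub>1 * t) \<partial>nut) - (\<integral>t. t / (1 + b\<^sub>2 * t) \<partial>nut))"
      using s\<^sub>1(5) s\<^sub>2(5) by (simp add: algebra_simps)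
    then show ?thesis
      unfolding B_def integral_resolvent_diff[OF nut s\<^sub>1(2) s\<^sub>2(2)] by (simp add: algebra_simps)
  qed
  have A_CS: "A\<^sup>2 \<le> (\<integral>t. (t / (1 + a\<^sub>1 * t))\<^sup>2 \<partial>nu) * (\<integral>t. (t / (1 + a\<^sub>2 * t))\<^sup>2 \<partial>nu)"
    unfolding A_def using integrable_resolvent_mult[OF nu] s\<^sub>1(1) s\<^sub>2(1)
    by (intro Cauchy_Schwarz_integral) (simp_all add: power2_eq_square)
  have B_CS: "B\<^sup>2 \<le> (\<integral>t. (t / (1 + b\<^sub>1 * t))\<^sup>2 \<partial>nut) * (\<integral>t. (t / (1 + b\<^sub>2 * t))\<^sup>2 \<partial>nut)"
    unfolding B_def using integrable_resolvent_mult[OF nut] s\<^sub>1(2) s\<^sub>2(2)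
    by (intro Cauchy_Schwarz_integral) (simp_all add: power2_eq_square)
  have "a\<^sub>1 = a\<^sub>2"
    by (rule eq_if_cross_relations[OF b_rel a_rel A_CS B_CS \<open>c \<ge> 0\<close>]) (use s\<^sub>1(6) s\<^sub>2(6) in auto)
  moreover from this have "x * b\<^sub>1 = x * b\<^sub>2" using s\<^sub>1(4) s\<^sub>2(4) by simp
  ultimately show ?thesis using s\<^sub>1(3) by simp
qed

text \<open>Whether \<open>\<nu>\<close> or \<open>\<tilde>\<nu>\<close> is the Dirac mass at 0 plays no role in the argument.\<close>

lemma prob_Rplus_nondiracD:
  assumes "prob_Rplus_nondirac M"
  shows "finite_measure M" "sets M = sets borel" "emeasure M {..<0} = 0"
  using assms prob_space.finite_measure unfolding prob_Rplus_nondirac_def by blast+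

theorem lemma3p8:
  fixes c :: real and nu nut :: "real measure"
    and dt d x :: "nat \<Rightarrow> real"
  assumes c: "c > 0"
    and nu: "prob_Rplus_nondirac nu" and nut: "prob_Rplus_nondirac nut"
    and hyp: "\<And>i. i \<in> {1, 2} \<Longrightarrow>
        dt i \<in> Dset nu \<and> x i \<noteq> 0 \<and>
        d i = c * (\<integral>t. t / (- x i * (1 + dt i * t)) \<partial>nu) \<and> d i \<in> Dset nut \<and>
        dt i = (\<integral>t. t / (- x i * (1 + d i * t)) \<partial>nut) \<and>
        1 - (x i)\<^sup>2 * (c * (\<integral>t. t\<^sup>2 / ((x i)\<^sup>2 * (1 + dt i * t)\<^sup>2) \<partial>nu))
              * (\<integral>t. t\<^sup>2 / ((x i)\<^sup>2 * (1 + d i * t)\<^sup>2) \<partial>nut) > 0"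
  shows "(dt 1 \<noteq> dt 2 \<longrightarrow> x 1 \<noteq> x 2) \<and> (d 1 \<noteq> d 2 \<longrightarrow> x 1 \<noteq> x 2)"
proof -
  have sol: "stable_solution c nu nut (x i) (dt i) (d i)" if "i \<in> {1, 2}" for i
    using hyp[OF that] unfolding stable_solution_def .
  have "dt 1 = dt 2 \<and> d 1 = d 2" if "x 1 = x 2"
  proof (rule stable_solution_unique)
    show "stable_solution c nu nut (x 2) (dt 1) (d 1)" using sol[of 1] that by simp
  qed (use prob_Rplus_nondiracD[OF nu] prob_Rplus_nondiracD[OF nut] c sol[of 2] in auto)
  then show ?thesis by blast
qed

end
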